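(* Let $A$ be a linear space with two multiplications $\cdot,\ast:A\otimes A\to A$ and two commuting bijective linear maps $\alpha,\beta:A\to A$ that are multiplicative with respect to both $\cdot$ and $\ast$, such that $(A,\cdot,\alpha,\beta)$ is a BiHom-commutative algebra. Then $(x\cdot\beta(y))\ast\alpha\beta(z)=(x\ast\beta(z))\cdot\alpha\beta(y)$ holds for all $x,y,z\in A$ if and only if $\alpha(x)\cdot(y\ast z)=(x\cdot y)\ast\beta(z)$ holds for all $x,y,z\in A$.
   Context: Work over a field. A BiHom-associative algebra is a 4-tuple $(A,\cdot,\alpha,\beta)$ with $\alpha,\beta:A\to A$ commuting linear maps, multiplicative for $\cdot$, and $\alpha(x)\cdot(y\cdot z)=(x\cdot y)\cdot\beta(z)$ for all $x,y,z$; it is BiHom-commutative if moreover $\beta(a)\cdot\alpha(b)=\beta(b)\cdot\alpha(a)$ for all $a,b$. *)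

theory Defs
  imports Main "HOL.Vector_Spaces"
begin

text \<open>A multiplication A (x) A -> A is a bilinear map.\<close>

definition bilinear_map :: "('k::field \<Rightarrow> 'a::ab_group_add \<Rightarrow> 'a) \<Rightarrow> ('a \<Rightarrow> 'a \<Rightarrow> 'a) \<Rightarrow> bool" where
  "bilinear_map scale m \<longleftrightarrow>
     (\<forall>y. Vector_Spaces.linear scale scale (\<lambda>x. m x y)) \<and>
     (\<forall>x. Vector_Spaces.linear scale scale (\<lambda>y. m x y))"

definition multiplicative :: "('a \<Rightarrow> 'a \<Rightarrow> 'a) \<Rightarrow> ('a \<Rightarrow> 'a) \<Rightarrow> bool" where
  "multiplicative m f \<longleftrightarrow> (\<forall>x y. f (m x y) = m (f x) (f y))"

definition BiHom_associative ::
  "('k::field \<Rightarrow> 'a::ab_group_add \<Rightarrow> 'a) \<Rightarrow> ('a \<Rightarrow> 'a \<Rightarrow> 'a) \<Rightarrow> ('a \<Rightarrow> 'a) \<Rightarrow> ('a \<Rightarrow> 'a) \<Rightarrow> bool" where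
  "BiHom_associative scale m \<alpha> \<beta> \<longleftrightarrow>
     bilinear_map scale m \<and>
     Vector_Spaces.linear scale scale \<alpha> \<and> Vector_Spaces.linear scale scale \<beta> \<and>
     \<alpha> \<circ> \<beta> = \<beta> \<circ> \<alpha> \<and>
     multiplicative m \<alpha> \<and> multiplicative m \<beta> \<and>
     (\<forall>x y z. m (\<alpha> x) (m y z) = m (m x y) (\<beta> z))"

definition BiHom_commutative ::
  "('k::field \<Rightarrow> 'a::ab_group_add \<Rightarrow> 'a) \<Rightarrow> ('a \<Rightarrow> 'a \<Rightarrow> 'a) \<Rightarrow> ('a \<Rightarrow> 'a) \<Rightarrow> ('a \<Rightarrow> 'a) \<Rightarrow> bool" where
  "BiHom_commutative scale m \<alpha> \<beta> \<longleftrightarrow>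
     BiHom_associative scale m \<alpha> \<beta> \<and>
     (\<forall>a b. m (\<beta> a) (\<alpha> b) = m (\<beta> b) (\<alpha> a))"

end

theory Submission
  imports Defs
begin

text \<open>Both directions are the same short computation: write the arguments as images under
  \<alpha> and \<beta> (possible by surjectivity), move \<alpha> and \<beta> through \<open>\<ast>\<close> by multiplicativity, and use
  BiHom-commutativity of \<open>\<cdot>\<close> to swap the two factors of the product that is not of the
  required shape.\<close>

lemma mixed_BiHom_assoc_if_twisted_identity:
  fixes dot star :: "'a \<Rightarrow> 'a \<Rightarrow> 'a" and \<alpha> \<beta> :: "'a \<Rightarrow> 'a"
  assumes "surj \<alpha>" and "surj \<beta>"
    and ab: "\<And>x. \<alpha> (\<beta> x) = \<beta> (\<alpha> x)"
    and star_\<alpha>: "\<And>x y. \<alpha> (star x y) = star (\<alpha> x) (\<alpha> y)"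
    and star_\<beta>: "\<And>x y. \<beta> (star x y) = star (\<beta> x) (\<beta> y)"
    and comm: "\<And>a b. dot (\<beta> a) (\<alpha> b) = dot (\<beta> b) (\<alpha> a)"
    and twisted: "\<And>x y z. star (dot x (\<beta> y)) (\<alpha> (\<beta> z)) = dot (star x (\<beta> z)) (\<alpha> (\<beta> y))"
  shows "dot (\<alpha> X) (star Y Z) = star (dot X Y) (\<beta> Z)"
proof -
  obtain y where X: "X = \<beta> (\<beta> y)"
    using \<open>surj \<beta>\<close> by (metis surj_def)
  obtain b where Y: "Y = \<alpha> b" using \<open>surj \<alpha>\<close> by (rule surjE)
  obtain z where Z: "Z = \<alpha> z" using \<open>surj \<alpha>\<close> by (rule surjE)
  have "star (dot X Y) (\<beta> Z) = star (dot (\<beta> b) (\<beta> (\<alpha> y))) (\<alpha> (\<beta> z))"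
    unfolding X Y Z by (simp only: comm[of "\<beta> y" b] ab)
  also have "\<dots> = dot (\<beta> (star b z)) (\<alpha> (\<beta> (\<alpha> y)))"
    using twisted[of "\<beta> b" "\<alpha> y" z] by (simp only: star_\<beta>)
  also have "\<dots> = dot (\<beta> (\<beta> (\<alpha> y))) (\<alpha> (star b z))"
    by (rule comm)
  also have "\<dots> = dot (\<alpha> X) (star Y Z)"
    unfolding X Y Z by (simp only: ab star_\<alpha>)
  finally show ?thesis by (rule sym)
qed

lemma twisted_identity_if_mixed_BiHom_assoc:
  fixes dot star :: "'a \<Rightarrow> 'a \<Rightarrow> 'a" and \<alpha> \<beta> :: "'a \<Rightarrow> 'a"
  assumes "surj \<alpha>" and "surj \<beta>"
    and ab: "\<And>x. \<alpha> (\<beta> x) = \<beta> (\<alpha> x)"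
    and star_\<alpha>: "\<And>x y. \<alpha> (star x y) = star (\<alpha> x) (\<alpha> y)"
    and star_\<beta>: "\<And>x y. \<beta> (star x y) = star (\<beta> x) (\<beta> y)"
    and comm: "\<And>a b. dot (\<beta> a) (\<alpha> b) = dot (\<beta> b) (\<alpha> a)"
    and mixed_assoc: "\<And>x y z. dot (\<alpha> x) (star y z) = star (dot x y) (\<beta> z)"
  shows "star (dot x (\<beta> y)) (\<alpha> (\<beta> z)) = dot (star x (\<beta> z)) (\<alpha> (\<beta> y))"
proof -
  obtain u where x: "x = \<beta> u" using \<open>surj \<beta>\<close> by (rule surjE)
  obtain v where v: "\<alpha> v = \<beta> y" using \<open>surj \<alpha>\<close> by (metis surjD)
  have "dot (star x (\<beta> z)) (\<alpha> (\<beta> y)) = dot (\<beta> (\<beta> y)) (\<alpha> (star u z))"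
    unfolding x by (simp only: star_\<beta>[symmetric] comm[of "star u z" "\<beta> y"])
  also have "\<dots> = dot (\<alpha> (\<beta> v)) (star (\<alpha> u) (\<alpha> z))"
    by (simp only: ab v star_\<alpha>)
  also have "\<dots> = star (dot (\<beta> v) (\<alpha> u)) (\<alpha> (\<beta> z))"
    using mixed_assoc[of "\<beta> v" "\<alpha> u" "\<alpha> z"] by (simp only: ab)
  also have "\<dots> = star (dot x (\<beta> y)) (\<alpha> (\<beta> z))"
    unfolding x by (simp only: comm[of v u] v)
  finally show ?thesis by (rule sym)
qed

theorem lemma3p2:
  fixes scale :: "'k::field \<Rightarrow> 'a::ab_group_add \<Rightarrow> 'a"
    and dot star :: "'a \<Rightarrow> 'a \<Rightarrow> 'a"
    and \<alpha> \<beta> :: "'a \<Rightarrow> 'a"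
  assumes "vector_space scale"
    and "bilinear_map scale dot"
    and "bilinear_map scale star"
    and "Vector_Spaces.linear scale scale \<alpha>"
    and "Vector_Spaces.linear scale scale \<beta>"
    and "bij \<alpha>" and "bij \<beta>"
    and "\<alpha> \<circ> \<beta> = \<beta> \<circ> \<alpha>"
    and "multiplicative dot \<alpha>" and "multiplicative dot \<beta>"
    and "multiplicative star \<alpha>" and "multiplicative star \<beta>"
    and "BiHom_commutative scale dot \<alpha> \<beta>"
  shows "(\<forall>x y z. star (dot x (\<beta> y)) (\<alpha> (\<beta> z)) = dot (star x (\<beta> z)) (\<alpha> (\<beta> y)))
     \<longleftrightarrow> (\<forall>x y z. dot (\<alpha> x) (star y z) = star (dot x y) (\<beta> z))"
proof -
  have surj: "surj \<alpha>" "surj \<beta>"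
    using \<open>bij \<alpha>\<close> \<open>bij \<beta>\<close> by (simp_all add: bij_is_surj)
  have ab: "\<And>x. \<alpha> (\<beta> x) = \<beta> (\<alpha> x)"
    using \<open>\<alpha> \<circ> \<beta> = \<beta> \<circ> \<alpha>\<close> by (metis comp_apply)
  have star: "\<And>x y. \<alpha> (star x y) = star (\<alpha> x) (\<alpha> y)" "\<And>x y. \<beta> (star x y) = star (\<beta> x) (\<beta> y)"
    using \<open>multiplicative star \<alpha>\<close> \<open>multiplicative star \<beta>\<close> unfolding multiplicative_def by blast+
  have comm: "\<And>a b. dot (\<beta> a) (\<alpha> b) = dot (\<beta> b) (\<alpha> a)"
    using \<open>BiHom_commutative scale dot \<alpha> \<beta>\<close> unfolding BiHom_commutative_def by blast
  show ?thesis
  proof (intro iffI allI)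
    fix x y z
    assume twisted: "\<forall>x y z. star (dot x (\<beta> y)) (\<alpha> (\<beta> z)) = dot (star x (\<beta> z)) (\<alpha> (\<beta> y))"
    show "dot (\<alpha> x) (star y z) = star (dot x y) (\<beta> z)"
      using mixed_BiHom_assoc_if_twisted_identity[where dot = dot and star = star and \<alpha> = \<alpha> and \<beta> = \<beta>]
        surj ab star comm twisted by blast
  next
    fix x y z
    assume mixed_assoc: "\<forall>x y z. dot (\<alpha> x) (star y z) = star (dot x y) (\<beta> z)"
    show "star (dot x (\<beta> y)) (\<alpha> (\<beta> z)) = dot (star x (\<beta> z)) (\<alpha> (\<beta> y))"
      using twisted_identity_if_mixed_BiHom_assoc[where dot = dot and star = star and \<alpha> = \<alpha> and \<beta> = \<beta>]
        surj ab star comm mixed_assoc by blast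
  qed
qed

end
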